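(* Let $\omega_0$ and $\omega_1$ be two symplectic (nondegenerate, antisymmetric) bilinear forms on $\mathbb{R}^4$ and let $\Sigma\subset\mathbb{R}^4$ be a $3$-dimensional linear subspace such that: (i) if $v,w\in\Sigma$ and $\omega_0(v,w)$ or $\omega_1(v,w)$ is positive, then $\omega_0(v,w)$ and $\omega_1(v,w)$ are both nonnegative; (ii) if $v\in\ker(\omega_0|_{\Sigma})\cap\ker(\omega_1|_{\Sigma})$ and $\omega_0(v,w)>0$, then $\omega_1(v,w)\ge 0$. Then for all $0\le t\le 1$, the form $t\omega_0+(1-t)\omega_1$ is symplectic. *)

theory Defs
  imports "HOL-Analysis.Analysis"
begin

definition symplectic_form :: "('a::real_vector \<Rightarrow> 'a \<Rightarrow> real) \<Rightarrow> bool" where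
  "symplectic_form \<omega> \<longleftrightarrow>
     bilinear \<omega> \<and> (\<forall>v w. \<omega> v w = - \<omega> w v) \<and> (\<forall>v. (\<forall>w. \<omega> v w = 0) \<longrightarrow> v = 0)"

definition restr_kernel :: "('a \<Rightarrow> 'a \<Rightarrow> real) \<Rightarrow> 'a set \<Rightarrow> 'a set" where
  "restr_kernel \<omega> S = {v \<in> S. \<forall>w\<in>S. \<omega> v w = 0}"

end

theory Submission
  imports Defs
begin

text \<open>
  Bilinearity and antisymmetry pass to the convex combination \<open>\<omega>\<^sub>t\<close>; only nondegeneracy needs
  the hypotheses. An antisymmetric form on the odd-dimensional hyperplane \<open>\<Sigma>\<close> is degenerate, so
  if \<open>\<omega>\<^sub>t\<close> had a nonzero kernel vector, then \<open>\<omega>\<^sub>t\<close> would also have one lying in \<open>\<Sigma>\<close>. For such a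
  vector \<open>k\<close> and \<open>w \<in> \<Sigma>\<close> the values \<open>\<omega>\<^sub>0(k,w)\<close> and \<open>\<omega>\<^sub>1(k,w)\<close> have compatible signs by (i) and
  average to zero, so both vanish: \<open>k\<close> lies in the common kernel on \<open>\<Sigma>\<close>. Choosing \<open>w\<close> with
  \<open>\<omega>\<^sub>0(k,w) > 0\<close>, condition (ii) gives \<open>\<omega>\<^sub>1(k,w) \<ge> 0\<close>, hence \<open>\<omega>\<^sub>t(k,w) > 0\<close>, a contradiction.
\<close>

lemma linear_real_combination:
  fixes f g :: "'a::real_vector \<Rightarrow> real"
  assumes "linear f" and "linear g"
  shows "linear (\<lambda>x. a * f x + b * g x)"
  using assms by (auto simp: linear_iff algebra_simps)

lemma bilinear_real_combination:
  fixes f g :: "'a::real_vector \<Rightarrow> 'b::real_vector \<Rightarrow> real"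
  assumes "bilinear f" and "bilinear g"
  shows "bilinear (\<lambda>v w. a * f v w + b * g v w)"
  using assms unfolding bilinear_def by (auto intro!: linear_real_combination)

lemma symplectic_formD:
  assumes "symplectic_form \<omega>"
  shows "bilinear \<omega>" and "\<omega> v w = - \<omega> w v" and "(\<And>w. \<omega> v w = 0) \<Longrightarrow> v = 0"
  using assms unfolding symplectic_form_def by blast+

lemma symplectic_form_exists_pos:
  assumes "symplectic_form \<omega>" and "v \<noteq> 0"
  obtains w where "\<omega> v w > 0"
proof -
  obtain w where w: "\<omega> v w \<noteq> 0"
    using symplectic_formD(3)[OF assms(1)] assms(2) by blast
  have "\<omega> v (- w) = - \<omega> v w"
    using symplectic_formD(1)[OF assms(1)] by (rule bilinear_rneg)
  with w have "\<omega> v w > 0 \<or> \<omega> v (- w) > 0"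
    by linarith
  with that show thesis
    by blast
qed

lemma antisym_bilinear_dim3_radical:
  fixes \<omega> :: "'a::real_vector \<Rightarrow> 'a \<Rightarrow> real"
  assumes bl: "bilinear \<omega>" and antisym: "\<And>v w. \<omega> v w = - \<omega> w v"
    and S: "subspace S" "dim S = 3"
  obtains k where "k \<in> S" "k \<noteq> 0" "\<And>w. w \<in> S \<Longrightarrow> \<omega> k w = 0"
proof -
  obtain B where B: "B \<subseteq> S" "independent B" "S \<subseteq> span B" "card B = 3"
    using basis_exists[of S] S(2) by auto
  then obtain b1 b2 b3 where b: "B = {b1, b2, b3}" "b1 \<noteq> b2" "b2 \<noteq> b3" "b1 \<noteq> b3"
    by (metis card_3_iff)
  have in_S: "b1 \<in> S" "b2 \<in> S" "b3 \<in> S"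
    using B(1) b(1) by auto
  have alt: "\<omega> x x = 0" for x
    using antisym[of x x] by simp
  have radical_if_basis: "\<omega> k w = 0"
    if "\<omega> k b1 = 0" "\<omega> k b2 = 0" "\<omega> k b3 = 0" "w \<in> S" for k w
  proof (rule linear_eq_0_on_span[of "\<omega> k" B])
    show "linear (\<omega> k)"
      using bl by (simp add: bilinear_def)
  qed (use that B(3) b(1) in blast)+
  show thesis
  proof (cases "\<omega> b1 b2 = 0 \<and> \<omega> b1 b3 = 0 \<and> \<omega> b2 b3 = 0")
    case True
    have "b1 \<noteq> 0"
      using B(2) b(1) by (metis dependent_zero insertI1)
    moreover have "\<omega> b1 w = 0" if "w \<in> S" for w
      using True alt that by (auto intro: radical_if_basis)
    ultimately show thesis
      using that in_S(1) by blast
  next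
    case False
    \<comment> \<open>the coefficients of \<open>k\<close> span the kernel of the antisymmetric Gram matrix of \<open>\<omega>\<close> on \<open>b1, b2, b3\<close>\<close>
    define u where "u x = (if x = b1 then \<omega> b2 b3 else if x = b2 then - \<omega> b1 b3 else \<omega> b1 b2)" for x
    define k where "k = (\<Sum>x\<in>B. u x *\<^sub>R x)"
    have k: "k = \<omega> b2 b3 *\<^sub>R b1 - \<omega> b1 b3 *\<^sub>R b2 + \<omega> b1 b2 *\<^sub>R b3"
      using b by (simp add: k_def u_def add.assoc)
    have "k \<in> S"
      unfolding k by (intro subspace_add subspace_diff subspace_mul S(1) in_S)
    moreover have "k \<noteq> 0"
    proof
      assume "k = 0"
      moreover have "\<exists>x\<in>B. u x \<noteq> 0"
        using False b by (auto simp: u_def)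
      ultimately have "dependent B"
        using b(1) by (auto simp: dependent_finite k_def)
      with B(2) show False ..
    qed
    moreover have "\<omega> k b1 = 0" "\<omega> k b2 = 0" "\<omega> k b3 = 0"
      unfolding k using alt antisym[of b2 b1] antisym[of b3 b1] antisym[of b3 b2]
      by (simp_all add: bilinear_ladd[OF bl] bilinear_lsub[OF bl] bilinear_lmul[OF bl] algebra_simps)
    ultimately show thesis
      using that radical_if_basis by blast
  qed
qed

lemma span_insert_hyperplane:
  fixes S :: "'a::euclidean_space set"
  assumes "subspace S" and "dim S + 1 = DIM('a)" and "v \<notin> S"
  shows "span (insert v S) = UNIV"
proof -
  have "v \<notin> span S"
    using assms(1,3) span_eq_iff by blast
  then have "dim (insert v S) = DIM('a)"
    using assms(2) by (simp add: dim_insert)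
  then show ?thesis
    by (simp add: dim_eq_full)
qed

lemma antisym_bilinear_radical_meets_hyperplane:
  fixes \<omega> :: "'a::euclidean_space \<Rightarrow> 'a \<Rightarrow> real"
  assumes bl: "bilinear \<omega>" and antisym: "\<And>v w. \<omega> v w = - \<omega> w v"
    and S: "subspace S" "dim S = 3" and dim4: "DIM('a) = 4"
    and v: "v \<noteq> 0" "\<And>w. \<omega> v w = 0"
  obtains k where "k \<in> S" "k \<noteq> 0" "\<And>w. \<omega> k w = 0"
proof (cases "v \<in> S")
  case True
  with v that show thesis by blast
next
  case False
  obtain k where k: "k \<in> S" "k \<noteq> 0" "\<And>w. w \<in> S \<Longrightarrow> \<omega> k w = 0"
    using antisym_bilinear_dim3_radical[OF bl antisym S] by blast
  have kv: "\<omega> k v = 0"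
    using antisym[of k v] v(2) by simp
  have "\<omega> k w = 0" for w
  proof (rule linear_eq_0_on_span[of "\<omega> k" "insert v S"])
    show "linear (\<omega> k)"
      using bl by (simp add: bilinear_def)
    show "w \<in> span (insert v S)"
      using span_insert_hyperplane[OF S(1) _ False] S(2) dim4 by simp
  qed (use kv k(3) in blast)
  with k that show thesis by blast
qed

lemma convex_combination_eq_0_same_sign:
  fixes a b t :: real
  assumes "0 < t" "t < 1" "t * a + (1 - t) * b = 0"
    and "a > 0 \<Longrightarrow> b \<ge> 0" and "a < 0 \<Longrightarrow> b \<le> 0"
  shows "a = 0 \<and> b = 0"
proof -
  have "a = 0"
  proof (rule ccontr)
    assume "a \<noteq> 0"
    then consider "a > 0" "b \<ge> 0" | "a < 0" "b \<le> 0"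
      using assms(4,5) by fastforce
    then show False
      using assms(1-3) by cases (smt (verit) mult_pos_pos mult_nonneg_nonneg mult_pos_neg mult_nonneg_nonpos)+
  qed
  with assms(2,3) show ?thesis by simp
qed

lemma convex_radical_in_common_radical:
  assumes "0 < t" "t < 1" and "k \<in> \<Sigma>"
    and radical: "\<And>w. w \<in> \<Sigma> \<Longrightarrow> t * \<omega>0 k w + (1 - t) * \<omega>1 k w = 0"
    and antisym0: "\<And>v w. \<omega>0 v w = - \<omega>0 w v" and antisym1: "\<And>v w. \<omega>1 v w = - \<omega>1 w v"
    and compatible: "\<And>v w. v \<in> \<Sigma> \<Longrightarrow> w \<in> \<Sigma> \<Longrightarrow> (\<omega>0 v w > 0 \<or> \<omega>1 v w > 0) \<Longrightarrow>
                 \<omega>0 v w \<ge> 0 \<and> \<omega>1 v w \<ge> 0"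
  shows "k \<in> restr_kernel \<omega>0 \<Sigma> \<inter> restr_kernel \<omega>1 \<Sigma>"
proof -
  have "\<omega>0 k w = 0 \<and> \<omega>1 k w = 0" if w: "w \<in> \<Sigma>" for w
  proof (rule convex_combination_eq_0_same_sign[OF assms(1,2) radical[OF w]])
    show "\<omega>1 k w \<ge> 0" if "\<omega>0 k w > 0"
      using compatible[OF \<open>k \<in> \<Sigma>\<close> w] that by blast
    show "\<omega>1 k w \<le> 0" if "\<omega>0 k w < 0"
      using compatible[OF w \<open>k \<in> \<Sigma>\<close>] that antisym0[of w k] antisym1[of w k] by simp
  qed
  with \<open>k \<in> \<Sigma>\<close> show ?thesis
    by (simp add: restr_kernel_def)
qed

theorem lemma7:
  fixes \<omega>0 \<omega>1 :: "real^4 \<Rightarrow> real^4 \<Rightarrow> real" and \<Sigma> :: "(real^4) set" and t :: real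
  assumes "symplectic_form \<omega>0" and "symplectic_form \<omega>1"
    and "subspace \<Sigma>" and "dim \<Sigma> = 3"
    and "\<And>v w. v \<in> \<Sigma> \<Longrightarrow> w \<in> \<Sigma> \<Longrightarrow> (\<omega>0 v w > 0 \<or> \<omega>1 v w > 0) \<Longrightarrow>
                 \<omega>0 v w \<ge> 0 \<and> \<omega>1 v w \<ge> 0"
    and "\<And>v w. v \<in> restr_kernel \<omega>0 \<Sigma> \<inter> restr_kernel \<omega>1 \<Sigma> \<Longrightarrow> \<omega>0 v w > 0 \<Longrightarrow> \<omega>1 v w \<ge> 0"
    and "0 \<le> t" and "t \<le> 1"
  shows "symplectic_form (\<lambda>v w. t * \<omega>0 v w + (1 - t) * \<omega>1 v w)"
proof -
  note antisym0 = symplectic_formD(2)[OF assms(1)] and antisym1 = symplectic_formD(2)[OF assms(2)]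
  let ?\<omega> = "\<lambda>v w. t * \<omega>0 v w + (1 - t) * \<omega>1 v w"
  have bl: "bilinear ?\<omega>"
    using assms(1,2) by (intro bilinear_real_combination symplectic_formD(1))
  have antisym: "?\<omega> v w = - ?\<omega> w v" for v w
    using antisym0[of v w] antisym1[of v w] by (simp add: algebra_simps)
  have "v = 0" if radical: "\<forall>w. ?\<omega> v w = 0" for v
  proof (rule ccontr)
    assume "v \<noteq> 0"
    then have "t \<noteq> 0" "t \<noteq> 1"
      using radical symplectic_formD(3)[OF assms(1)] symplectic_formD(3)[OF assms(2)] by force+
    with assms(7,8) have t: "0 < t" "t < 1"
      by auto
    obtain k where k: "k \<in> \<Sigma>" "k \<noteq> 0" "\<And>w. ?\<omega> k w = 0"
      using antisym_bilinear_radical_meets_hyperplane[OF bl antisym assms(3,4) _ \<open>v \<noteq> 0\<close>] radical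
      by auto
    have "k \<in> restr_kernel \<omega>0 \<Sigma> \<inter> restr_kernel \<omega>1 \<Sigma>"
      using k(3) by (intro convex_radical_in_common_radical[OF t k(1) _ antisym0 antisym1 assms(5)])
    moreover obtain w where "\<omega>0 k w > 0"
      using symplectic_form_exists_pos[OF assms(1) k(2)] .
    ultimately have "?\<omega> k w > 0"
      using assms(6) t by (simp add: add_pos_nonneg)
    with k(3) show False
      by simp
  qed
  with bl antisym show ?thesis
    unfolding symplectic_form_def by blast
qed

end
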